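(* Let $\lambda,q\in\mathbf{k}$ and let $(A,d_0)$ be a commutative differential $\mathbf{k}$-algebra of weight $\lambda$. Then $(T^+(A),\prec_A,\succ_A,\bullet_A,d_A)$ is a commutative differential $q$-tridendriform algebra of weight $\lambda$.
   Context: $\mathbf{k}$ is a commutative unital ring. A commutative differential algebra of weight $\lambda$ is a commutative associative algebra $A$ with a linear map $d_0$ such that $d_0(ab)=d_0(a)b+ad_0(b)+\lambda d_0(a)d_0(b)$. Let $T(A)=\bigoplus_{k\ge0}A^{\otimes k}$ (with $A^{\otimes 0}=\mathbf{k}$, whose unit $\mathbf 1$ is the empty tensor) and $T^+(A)=\bigoplus_{k\ge1}A^{\otimes k}$. The quasi-shuffle product $\ast_q$ of weight $q$ on $T(A)$ is defined recursively by $\mathbf 1\ast_q\mathfrak a=\mathfrak a\ast_q\mathbf 1=\mathfrak a$ and, for pure tensors $\mathfrak a=a_1\otimes\mathfrak a'$, $\mathfrak b=b_1\otimes\mathfrak b'$ with $a_1,b_1\in A$, $\mathfrak a\ast_q\mathfrak b=a_1\otimes(\mathfrak a'\ast_q\mathfrak b)+b_1\otimes(\mathfrak a\ast_q\mathfrak b')+q(a_1b_1)\otimes(\mathfrak a'\ast_q\mathfrak b')$, extended bilinearly. On $T^+(A)$ define bilinear operations on pure tensors by $\mathfrak a\prec_A\mathfrak b:=a_1\otimes(\mathfrak a'\ast_q\mathfrak b)$, $\mathfrak a\succ_A\mathfrak b:=b_1\otimes(\mathfrak a\ast_q\mathfrak b')$, $\mathfrak a\bullet_A\mathfrak b:=(a_1b_1)\otimes(\mathfrak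 a'\ast_q\mathfrak b')$. Define the linear map $d_A:T^+(A)\to T^+(A)$ by $d_A(a_1\otimes\cdots\otimes a_m)=\sum_{\emptyset\ne S\subseteq\{1,\dots,m\}}\lambda^{|S|-1}\,c^S_1\otimes\cdots\otimes c^S_m$, where $c^S_i=d_0(a_i)$ if $i\in S$ and $c^S_i=a_i$ otherwise (in particular $d_A(a_1)=d_0(a_1)$). For $q\in\mathbf{k}$, a $q$-tridendriform algebra is a $\mathbf{k}$-module $T$ with bilinear operations $\prec,\succ,\bullet$ such that, writing $\star_q:=\prec+\succ+q\bullet$, for all $a,b,c\in T$: $(a\prec b)\prec c=a\prec(b\star_q c)$, $(a\succ b)\prec c=a\succ(b\prec c)$, $(a\star_q b)\succ c=a\succ(b\succ c)$, $(a\succ b)\bullet c=a\succ(b\bullet c)$, $(a\prec b)\bullet c=a\bullet(b\succ c)$, $(a\bullet b)\prec c=a\bullet(b\prec c)$, $(a\bullet b)\bullet c=a\bullet(b\bullet c)$. It is commutative if $a\succ b=b\prec a$ and $a\bullet b=b\bullet a$ for all $a,b$. A derivation of weight $\lambda$ on it is a linear map $d$ with $d(a\ast b)=d(a)\ast b+a\ast d(b)+\lambda d(a)\ast d(b)$ for each $\ast\in\{\prec,\succ,\bullet\}$ and all $a,b$; then $(T,\prec,\succ,\bullet,d)$ is a differential $q$-tridendriform algebra of weight $\lambda$, called commutative if $(T,\prec,\succ,\bullet)$ is commutative. *)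

theory Defs
  imports Complex_Main "HOL-Library.Poly_Mapping"
begin

(* The scalar ring k is a type 'k :: comm_ring_1; the commutative (associative,
   not necessarily unital) k-algebra A is a type 'a :: comm_ring together with
   a k-action sc. *)

definition comm_k_algebra :: "('k::comm_ring_1 \<Rightarrow> 'a::comm_ring \<Rightarrow> 'a) \<Rightarrow> bool" where
  "comm_k_algebra sc \<longleftrightarrow> module sc \<and> (\<forall>r a b. sc r (a * b) = sc r a * b)"

definition diff_weight ::
  "('k::comm_ring_1 \<Rightarrow> 'a::comm_ring \<Rightarrow> 'a) \<Rightarrow> 'k \<Rightarrow> ('a \<Rightarrow> 'a) \<Rightarrow> bool" where
  "diff_weight sc lam d0 \<longleftrightarrow>
     (\<forall>a b. d0 (a + b) = d0 a + d0 b) \<and> (\<forall>r a. d0 (sc r a) = sc r (d0 a)) \<and>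
     (\<forall>a b. d0 (a * b) = d0 a * b + a * d0 b + sc lam (d0 a * d0 b))"

type_synonym ('a, 'k) fm = "'a list \<Rightarrow>\<^sub>0 'k"

definition smul :: "'k::comm_ring_1 \<Rightarrow> ('a, 'k) fm \<Rightarrow> ('a, 'k) fm" where
  "smul c f = Poly_Mapping.map (\<lambda>x. c * x) f"

definition wd :: "'a list \<Rightarrow> ('a, 'k::comm_ring_1) fm" where
  "wd w = Poly_Mapping.single w 1"

definition lin :: "('a list \<Rightarrow> ('b, 'k::comm_ring_1) fm) \<Rightarrow> ('a, 'k) fm \<Rightarrow> ('b, 'k) fm" where
  "lin G f = (\<Sum>w\<in>Poly_Mapping.keys f. smul (Poly_Mapping.lookup f w) (G w))"

definition bil :: "('a list \<Rightarrow> 'a list \<Rightarrow> ('a, 'k::comm_ring_1) fm) \<Rightarrow> ('a, 'k) fm \<Rightarrow> ('a, 'k) fm \<Rightarrow> ('a, 'k) fm" where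
  "bil G f g = (\<Sum>w\<in>Poly_Mapping.keys f. \<Sum>v\<in>Poly_Mapping.keys g. smul (Poly_Mapping.lookup f w * Poly_Mapping.lookup g v) (G w v))"

definition pre :: "'a \<Rightarrow> ('a, 'k::comm_ring_1) fm \<Rightarrow> ('a, 'k) fm" where
  "pre a = lin (\<lambda>w. wd (a # w))"

(* the quasi-shuffle product of weight q on (pure tensors represented by) words;
   the empty word is the unit 1 of T(A) *)
fun qsh :: "('k::comm_ring_1 \<Rightarrow> 'a::comm_ring \<Rightarrow> 'a) \<Rightarrow> 'k \<Rightarrow> 'a list \<Rightarrow> 'a list \<Rightarrow> ('a, 'k) fm" where
  "qsh sc q [] w = wd w"
| "qsh sc q (a # u) [] = wd (a # u)"
| "qsh sc q (a # u) (b # v) =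
     pre a (qsh sc q u (b # v)) + pre b (qsh sc q (a # u) v) + pre (sc q (a * b)) (qsh sc q u v)"

(* the operations on pure tensors of T^+(A) (values on the empty word are irrelevant) *)
fun prec_w :: "('k::comm_ring_1 \<Rightarrow> 'a::comm_ring \<Rightarrow> 'a) \<Rightarrow> 'k \<Rightarrow> 'a list \<Rightarrow> 'a list \<Rightarrow> ('a, 'k) fm" where
  "prec_w sc q (a # u) w = pre a (qsh sc q u w)"
| "prec_w sc q [] w = 0"

fun succ_w :: "('k::comm_ring_1 \<Rightarrow> 'a::comm_ring \<Rightarrow> 'a) \<Rightarrow> 'k \<Rightarrow> 'a list \<Rightarrow> 'a list \<Rightarrow> ('a, 'k) fm" where
  "succ_w sc q u (b # v) = pre b (qsh sc q u v)"
| "succ_w sc q u [] = 0"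

fun bul_w :: "('k::comm_ring_1 \<Rightarrow> 'a::comm_ring \<Rightarrow> 'a) \<Rightarrow> 'k \<Rightarrow> 'a list \<Rightarrow> 'a list \<Rightarrow> ('a, 'k) fm" where
  "bul_w sc q (a # u) (b # v) = pre (a * b) (qsh sc q u v)"
| "bul_w sc q [] w = 0"
| "bul_w sc q (a # u) [] = 0"

definition precA where "precA sc q = bil (prec_w sc q)"
definition succA where "succA sc q = bil (succ_w sc q)"
definition bulA where "bulA sc q = bil (bul_w sc q)"

definition dA_w :: "'k::comm_ring_1 \<Rightarrow> ('a \<Rightarrow> 'a) \<Rightarrow> 'a list \<Rightarrow> ('a, 'k) fm" where
  "dA_w lam d0 w =
     (\<Sum>S\<in>Pow {0..<length w} - {{}}.
        smul (lam ^ (card S - 1)) (wd (map (\<lambda>i. if i \<in> S then d0 (w ! i) else w ! i) [0..<length w])))"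

definition dA where "dA lam d0 = lin (dA_w lam d0)"

(* ---- T^+(A) as the quotient of the free module on nonempty words by the
   multilinearity relations of the tensor product over k ---- *)
definition tplus :: "('a, 'k::comm_ring_1) fm \<Rightarrow> bool" where
  "tplus f \<longleftrightarrow> [] \<notin> Poly_Mapping.keys f"

inductive_set tensor_rel :: "('k::comm_ring_1 \<Rightarrow> 'a::comm_ring \<Rightarrow> 'a) \<Rightarrow> ('a, 'k) fm set"
  for sc where
  add_gen: "wd (u @ [a + b] @ v) - wd (u @ [a] @ v) - wd (u @ [b] @ v) \<in> tensor_rel sc"
| scal_gen: "wd (u @ [sc r a] @ v) - smul r (wd (u @ [a] @ v)) \<in> tensor_rel sc"
| zero: "0 \<in> tensor_rel sc"
| plus: "x \<in> tensor_rel sc \<Longrightarrow> y \<in> tensor_rel sc \<Longrightarrow> x + y \<in> tensor_rel sc"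
| smult: "x \<in> tensor_rel sc \<Longrightarrow> smul c x \<in> tensor_rel sc"

definition teq :: "('k::comm_ring_1 \<Rightarrow> 'a::comm_ring \<Rightarrow> 'a) \<Rightarrow> ('a, 'k) fm \<Rightarrow> ('a, 'k) fm \<Rightarrow> bool" where
  "teq sc x y \<longleftrightarrow> x - y \<in> tensor_rel sc"

(* A commutative differential q-tridendriform algebra of weight lam, on the
   k-module T = {x. P x} / E, with (bilinear) operations given on representatives.
   The first block says the operations (and d) are well defined on T. *)
definition comm_diff_q_tridend ::
  "('x::ab_group_add \<Rightarrow> bool) \<Rightarrow> ('x \<Rightarrow> 'x \<Rightarrow> bool) \<Rightarrow> ('k \<Rightarrow> 'x \<Rightarrow> 'x) \<Rightarrow>
   ('x \<Rightarrow> 'x \<Rightarrow> 'x) \<Rightarrow> ('x \<Rightarrow> 'x \<Rightarrow> 'x) \<Rightarrow> ('x \<Rightarrow> 'x \<Rightarrow> 'x) \<Rightarrow> ('x \<Rightarrow> 'x) \<Rightarrow>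
   'k \<Rightarrow> 'k \<Rightarrow> bool" where
  "comm_diff_q_tridend P E sm pr su bu d q lam \<longleftrightarrow>
    (let st = (\<lambda>a b. pr a b + su a b + sm q (bu a b)) in
     (\<forall>a b. P a \<longrightarrow> P b \<longrightarrow> P (pr a b) \<and> P (su a b) \<and> P (bu a b)) \<and>
     (\<forall>a. P a \<longrightarrow> P (d a)) \<and>
     (\<forall>a a' b b'. P a \<longrightarrow> P a' \<longrightarrow> P b \<longrightarrow> P b' \<longrightarrow> E a a' \<longrightarrow> E b b' \<longrightarrow>
        E (pr a b) (pr a' b') \<and> E (su a b) (su a' b') \<and> E (bu a b) (bu a' b')) \<and>
     (\<forall>a a'. P a \<longrightarrow> P a' \<longrightarrow> E a a' \<longrightarrow> E (d a) (d a')) \<and>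
     (\<forall>a b c. P a \<longrightarrow> P b \<longrightarrow> P c \<longrightarrow>
        E (pr (pr a b) c) (pr a (st b c)) \<and>
        E (pr (su a b) c) (su a (pr b c)) \<and>
        E (su (st a b) c) (su a (su b c)) \<and>
        E (bu (su a b) c) (su a (bu b c)) \<and>
        E (bu (pr a b) c) (bu a (su b c)) \<and>
        E (pr (bu a b) c) (bu a (pr b c)) \<and>
        E (bu (bu a b) c) (bu a (bu b c))) \<and>
     (\<forall>a b. P a \<longrightarrow> P b \<longrightarrow> E (su a b) (pr b a) \<and> E (bu a b) (bu b a)) \<and>
     (\<forall>a b. P a \<longrightarrow> P b \<longrightarrow> E (d (a + b)) (d a + d b)) \<and>
     (\<forall>r a. P a \<longrightarrow> E (d (sm r a)) (sm r (d a))) \<and>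
     (\<forall>a b. P a \<longrightarrow> P b \<longrightarrow>
        E (d (pr a b)) (pr (d a) b + pr a (d b) + sm lam (pr (d a) (d b))) \<and>
        E (d (su a b)) (su (d a) b + su a (d b) + sm lam (su (d a) (d b))) \<and>
        E (d (bu a b)) (bu (d a) b + bu a (d b) + sm lam (bu (d a) (d b)))))"

end

theory Submission
  imports Defs
begin

text \<open>
  Work in the free module on words and let \<open>R\<close> be the submodule of multilinearity relations.
  Writing \<open>a \<cdot> F\<close> for \<open>pre a F\<close>, the quasi-shuffle product \<open>Q\<close> satisfies
  \<open>Q (a\<cdot>F) (b\<cdot>G) = a\<cdot>Q F (b\<cdot>G) + b\<cdot>Q (a\<cdot>F) G + (q(ab))\<cdot>Q F G\<close> and is commutative and
  associative already on words, while \<open>\<prec>, \<succ>, \<bullet>\<close> send \<open>(a\<cdot>F, b\<cdot>G)\<close> to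
  \<open>a\<cdot>Q F (b\<cdot>G)\<close>, \<open>b\<cdot>Q (a\<cdot>F) G\<close>, \<open>(ab)\<cdot>Q F G\<close>. So the tridendriform axioms reduce to
  associativity of \<open>Q\<close>, except that \<open>q\<bullet>\<close> produces the letter \<open>ab\<close> scaled by \<open>q\<close> where \<open>Q\<close> has
  the letter \<open>q(ab)\<close>: these agree only modulo \<open>R\<close>.

  The derivation obeys \<open>D (a\<cdot>F) = d\<^sub>0 a\<cdot>(F + \<lambda> D F) + a\<cdot>D F\<close>. Together with the
  recursion for \<open>Q\<close> and the weight-\<open>\<lambda>\<close> Leibniz rule for \<open>d\<^sub>0\<close> (which transfers to
  leading letters only modulo \<open>R\<close>), an induction on the total length shows that \<open>D\<close> is a
  weight-\<open>\<lambda>\<close> derivation of \<open>Q\<close> modulo \<open>R\<close>, and the three operations inherit this.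
  Every operation is multilinear in each letter, hence maps \<open>R\<close> into \<open>R\<close>, so everything
  descends to \<open>T\<^sup>+(A)\<close>.
\<close>

section \<open>Linear maps on the free module\<close>

lemma lookup_smul [simp]: "Poly_Mapping.lookup (smul c f) w = c * Poly_Mapping.lookup f w"
  unfolding smul_def by (simp add: Poly_Mapping.map.rep_eq when_def)

lemma smul_add [simp]: "smul c (f + g) = smul c f + smul c g"
  by (rule poly_mapping_eqI) (simp add: lookup_add distrib_left)

lemma smul_add_left: "smul (c + d) f = smul c f + smul d f"
  by (rule poly_mapping_eqI) (simp add: lookup_add distrib_right)

lemma smul_smul [simp]: "smul c (smul d f) = smul (c * d) f"
  by (rule poly_mapping_eqI) (simp add: mult.assoc)

lemma smul_one [simp]: "smul 1 f = f"
  by (rule poly_mapping_eqI) simp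

lemma smul_zero_left [simp]: "smul 0 f = 0"
  by (rule poly_mapping_eqI) simp

lemma smul_zero [simp]: "smul c 0 = 0"
  by (rule poly_mapping_eqI) simp


lemma smul_diff [simp]: "smul c (f - g) = smul c f - smul c g"
  by (rule poly_mapping_eqI) (simp add: lookup_minus right_diff_distrib)

lemma smul_minus_one: "smul (-1) f = - f"
  by (rule poly_mapping_eqI) simp

lemma smul_sum: "smul c (sum F A) = (\<Sum>i\<in>A. smul c (F i))"
  by (induction A rule: infinite_finite_induct) auto

lemma lin_eq_sum_superset:
  assumes "finite K" "Poly_Mapping.keys f \<subseteq> K"
  shows "lin G f = (\<Sum>w\<in>K. smul (Poly_Mapping.lookup f w) (G w))"
  unfolding lin_def
  by (rule sum.mono_neutral_left) (use assms in \<open>auto simp: in_keys_iff\<close>)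

lemma lin_add [simp]: "lin G (f + g) = lin G f + lin G g"
proof -
  let ?K = "Poly_Mapping.keys f \<union> Poly_Mapping.keys g"
  have "Poly_Mapping.keys (f + g) \<subseteq> ?K" by (rule keys_add)
  then show ?thesis
    by (simp add: lin_eq_sum_superset[of ?K] lookup_add smul_add_left sum.distrib)
qed

lemma lin_smul [simp]: "lin G (smul c f) = smul c (lin G f)"
proof -
  have "Poly_Mapping.keys (smul c f) \<subseteq> Poly_Mapping.keys f"
    by (auto simp: in_keys_iff)
  then show ?thesis
    by (subst lin_eq_sum_superset) (simp_all add: lin_def smul_sum)
qed

lemma lin_zero [simp]: "lin G 0 = 0"
  by (simp add: lin_def)

lemma lin_minus [simp]: "lin G (- f) = - lin G f"
  using lin_smul[of G "-1" f] by (simp add: smul_minus_one)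

lemma lin_diff [simp]: "lin G (f - g) = lin G f - lin G g"
  using lin_add[of G f "- g"] by simp

lemma keys_wd [simp]: "Poly_Mapping.keys (wd w) = {w}"
  by (simp add: wd_def)

lemma lookup_wd: "Poly_Mapping.lookup (wd w) v = (if w = v then 1 else 0)"
  by (simp add: wd_def lookup_single when_def)

lemma lin_wd [simp]: "lin G (wd w) = G w"
  by (simp add: lin_def lookup_wd)

lemma lin_fun_add: "lin (\<lambda>w. G w + H w) f = lin G f + lin H f"
  by (simp add: lin_def sum.distrib)

lemma lin_fun_diff: "lin (\<lambda>w. G w - H w) f = lin G f - lin H f"
  by (simp add: lin_def sum_subtractf)

lemma lin_fun_smul: "lin (\<lambda>w. smul c (G w)) f = smul c (lin G f)"
  by (simp add: lin_def smul_sum mult.commute)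

lemma lin_fun_zero [simp]: "lin (\<lambda>w. 0) f = 0"
  by (simp add: lin_def)

lemma lin_cong: "(\<And>w. w \<in> Poly_Mapping.keys f \<Longrightarrow> G w = H w) \<Longrightarrow> lin G f = lin H f"
  by (simp add: lin_def)

lemma lin_wd_eq: "lin wd f = f"
proof (rule poly_mapping_eqI)
  fix v
  have "Poly_Mapping.lookup (lin wd f) v =
        (\<Sum>w\<in>Poly_Mapping.keys f. Poly_Mapping.lookup f w * (if w = v then 1 else 0))"
    by (simp add: lin_def lookup_sum lookup_wd)
  also have "\<dots> = Poly_Mapping.lookup f v"
    by (simp add: in_keys_iff if_distrib cong: if_cong)
  finally show "Poly_Mapping.lookup (lin wd f) v = Poly_Mapping.lookup f v" .
qed

definition fm_linear :: "(('a, 'k::comm_ring_1) fm \<Rightarrow> ('b, 'k) fm) \<Rightarrow> bool" where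
  "fm_linear L \<longleftrightarrow> (\<forall>x y. L (x + y) = L x + L y) \<and> (\<forall>c x. L (smul c x) = smul c (L x))"

lemma fm_linearD:
  assumes "fm_linear L"
  shows "L (x + y) = L x + L y" "L (smul c x) = smul c (L x)" "L 0 = 0"
    "L (- x) = - L x" "L (x - y) = L x - L y"
proof -
  show add: "L (x + y) = L x + L y" for x y using assms by (simp add: fm_linear_def)
  show smul: "L (smul c x) = smul c (L x)" for c x using assms by (simp add: fm_linear_def)
  show "L 0 = 0" using add[of 0 0] by simp
  show minus: "L (- x) = - L x" for x using smul[of "-1" x] by (simp add: smul_minus_one)
  show "L (x - y) = L x - L y" using add[of x "- y"] minus[of y] by simp
qed

lemma fm_linear_sum: "fm_linear L \<Longrightarrow> L (sum F A) = (\<Sum>i\<in>A. L (F i))"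
  by (induction A rule: infinite_finite_induct) (auto simp: fm_linearD)

lemma fm_linear_commute_lin: "fm_linear L \<Longrightarrow> L (lin G f) = lin (\<lambda>w. L (G w)) f"
  by (simp add: lin_def fm_linear_sum fm_linearD)

lemma fm_linear_eq_lin: "fm_linear L \<Longrightarrow> L f = lin (\<lambda>w. L (wd w)) f"
  using fm_linear_commute_lin[of L wd f] by (simp add: lin_wd_eq)

lemma fm_linear_eqI:
  assumes "fm_linear L1" "fm_linear L2" "\<And>w. w \<in> Poly_Mapping.keys f \<Longrightarrow> L1 (wd w) = L2 (wd w)"
  shows "L1 f = L2 f"
  using fm_linear_eq_lin[OF assms(1), of f] fm_linear_eq_lin[OF assms(2), of f] assms(3)
  by (auto intro: lin_cong)

lemma fm_linear_lin [simp]: "fm_linear (lin G)"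
  by (simp add: fm_linear_def)

lemma fm_linear_id: "fm_linear (\<lambda>x. x)"
  by (simp add: fm_linear_def)

lemma fm_linear_add: "fm_linear H1 \<Longrightarrow> fm_linear H2 \<Longrightarrow> fm_linear (\<lambda>x. H1 x + H2 x)"
  by (simp add: fm_linear_def algebra_simps)


lemma fm_linear_smul: "fm_linear H \<Longrightarrow> fm_linear (\<lambda>x. smul c (H x))"
  by (simp add: fm_linear_def mult.commute)


lemma fm_linear_lin_comp: "fm_linear H \<Longrightarrow> fm_linear (\<lambda>x. lin G (H x))"
  by (simp add: fm_linear_def)

lemma bil_eq_lin: "bil G f g = lin (\<lambda>w. lin (\<lambda>v. G w v) g) f"
  by (simp add: bil_def lin_def smul_sum)

lemma bil_wd [simp]: "bil G (wd u) (wd v) = G u v"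
  by (simp add: bil_eq_lin)

lemma fm_linear_bil1: "fm_linear H \<Longrightarrow> fm_linear (\<lambda>x. bil G (H x) g)"
  by (simp add: bil_eq_lin fm_linear_def)

lemma fm_linear_bil2: "fm_linear H \<Longrightarrow> fm_linear (\<lambda>x. bil G f (H x))"
  unfolding bil_eq_lin fm_linear_def
  by (simp add: fm_linearD lin_fun_add lin_fun_smul)

lemma bil_swap: "bil G f g = bil (\<lambda>w v. G v w) g f"
  unfolding bil_def
  by (subst sum.swap) (simp add: mult.commute)

lemma bil_eqI:
  assumes "\<And>G. fm_linear (\<lambda>F. L1 F G)" "\<And>F. fm_linear (\<lambda>G. L1 F G)"
    "\<And>G. fm_linear (\<lambda>F. L2 F G)" "\<And>F. fm_linear (\<lambda>G. L2 F G)"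
    "\<And>u v. L1 (wd u) (wd v) = L2 (wd u) (wd v)"
  shows "L1 F G = L2 F G"
  by (rule fm_linear_eqI[OF assms(1,3)], rule fm_linear_eqI[OF assms(2,4)], rule assms(5))

lemma bil_add1 [simp]: "bil G (F1 + F2) H = bil G F1 H + bil G F2 H"
  by (rule fm_linearD(1)[OF fm_linear_bil1[OF fm_linear_id]])
lemma bil_add2 [simp]: "bil G F (H1 + H2) = bil G F H1 + bil G F H2"
  by (rule fm_linearD(1)[OF fm_linear_bil2[OF fm_linear_id]])
lemma bil_smul1 [simp]: "bil G (smul c F) H = smul c (bil G F H)"
  by (rule fm_linearD(2)[OF fm_linear_bil1[OF fm_linear_id]])
lemma bil_smul2 [simp]: "bil G F (smul c H) = smul c (bil G F H)"
  by (rule fm_linearD(2)[OF fm_linear_bil2[OF fm_linear_id]])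
lemma bil_zero1 [simp]: "bil G 0 H = 0"
  by (rule fm_linearD(3)[OF fm_linear_bil1[OF fm_linear_id]])
lemma bil_zero2 [simp]: "bil G F 0 = 0"
  by (rule fm_linearD(3)[OF fm_linear_bil2[OF fm_linear_id]])

lemma pre_wd [simp]: "pre a (wd w) = wd (a # w)"
  by (simp add: pre_def)

lemma wd_Cons: "wd (a # w) = pre a (wd w)"
  by simp

lemma fm_linear_pre_comp: "fm_linear H \<Longrightarrow> fm_linear (\<lambda>x. pre a (H x))"
  unfolding pre_def by (rule fm_linear_lin_comp)

lemma fm_linear_pre: "fm_linear (pre a)"
  using fm_linear_pre_comp[OF fm_linear_id, of a] by simp

lemma pre_add [simp]: "pre a (F + G) = pre a F + pre a G"
  by (simp add: pre_def)
lemma pre_smul [simp]: "pre a (smul c F) = smul c (pre a F)"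
  by (simp add: pre_def)
lemma pre_zero [simp]: "pre a 0 = 0"
  by (simp add: pre_def)

lemma fm_linear_eq_on_pre:
  assumes "fm_linear L1" "fm_linear L2" "L1 (wd []) = L2 (wd [])"
    "\<And>x w. L1 (pre x (wd w)) = L2 (pre x (wd w))"
  shows "L1 f = L2 f"
proof (rule fm_linear_eqI[OF assms(1,2)])
  fix w show "L1 (wd w) = L2 (wd w)"
    using assms(3,4) by (cases w) (simp_all del: pre_wd add: wd_Cons)
qed

lemma tplus_iff: "tplus f \<longleftrightarrow> Poly_Mapping.lookup f [] = 0"
  by (simp add: tplus_def in_keys_iff)

lemma tplus_lin: "(\<And>w. tplus (G w)) \<Longrightarrow> tplus (lin G f)"
  by (simp add: tplus_iff lin_def lookup_sum)

lemma tplus_zero: "tplus 0"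
  by (simp add: tplus_iff)
lemma tplus_add: "tplus F \<Longrightarrow> tplus G \<Longrightarrow> tplus (F + G)"
  by (simp add: tplus_iff lookup_add)
lemma tplus_smul: "tplus F \<Longrightarrow> tplus (smul c F)"
  by (simp add: tplus_iff)
lemma tplus_pre: "tplus (pre x F)"
  unfolding pre_def by (rule tplus_lin) (simp add: tplus_iff lookup_wd)

lemma qsh_Nil2 [simp]: "qsh sc q u [] = wd u"
  by (cases u) auto

lemma qsh_comm: "qsh sc q u v = qsh sc q v u"
  by (induction sc q u v rule: qsh.induct) (auto simp: mult.commute add_ac)

section \<open>Multilinearity relations\<close>

locale tensor_algebra =
  fixes sc :: "'k::comm_ring_1 \<Rightarrow> 'a::comm_ring \<Rightarrow> 'a" and q :: 'k
  assumes comm_alg: "comm_k_algebra sc"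
begin

lemma sc_add: "sc r (x + y) = sc r x + sc r y"
  using comm_alg by (simp add: comm_k_algebra_def module.scale_right_distrib)

lemma sc_mult: "sc r (a * b) = sc r a * b"
  using comm_alg by (simp add: comm_k_algebra_def)

lemma sc_mult2: "sc r (a * b) = a * sc r b"
  using sc_mult[of r b a] by (simp add: mult.commute)

lemma sc_sc: "sc r (sc s x) = sc s (sc r x)"
  using comm_alg by (simp add: comm_k_algebra_def module.scale_scale mult.commute)

abbreviation "R \<equiv> tensor_rel sc"

lemma R_add: "x \<in> R \<Longrightarrow> y \<in> R \<Longrightarrow> x + y \<in> R"
  by (rule tensor_rel.plus)

lemma R_smul: "x \<in> R \<Longrightarrow> smul c x \<in> R"
  by (rule tensor_rel.smult)

lemma R_minus: "x \<in> R \<Longrightarrow> - x \<in> R"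
  using R_smul[of x "-1"] by (simp add: smul_minus_one)

lemma R_sum: "(\<And>i. i \<in> A \<Longrightarrow> F i \<in> R) \<Longrightarrow> sum F A \<in> R"
  by (induction A rule: infinite_finite_induct) (auto intro: R_add tensor_rel.zero)

lemma R_lin: "(\<And>w. w \<in> Poly_Mapping.keys f \<Longrightarrow> G w \<in> R) \<Longrightarrow> lin G f \<in> R"
  unfolding lin_def by (rule R_sum) (auto intro: R_smul)

lemma R_diffE:
  assumes "x - y \<in> R"
  obtains r where "r \<in> R" "x = y + r"
  using assms by (metis add_diff_cancel_left' add_diff_eq diff_add_cancel)

lemma fm_linear_diff_in_R:
  assumes "fm_linear L1" "fm_linear L2"
    "\<And>w. w \<in> Poly_Mapping.keys f \<Longrightarrow> L1 (wd w) - L2 (wd w) \<in> R"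
  shows "L1 f - L2 f \<in> R"
proof -
  have "L1 f - L2 f = lin (\<lambda>w. L1 (wd w) - L2 (wd w)) f"
    using fm_linear_eq_lin[OF assms(1), of f] fm_linear_eq_lin[OF assms(2), of f]
    by (simp add: lin_fun_diff)
  also have "\<dots> \<in> R" by (rule R_lin) (rule assms(3))
  finally show ?thesis .
qed

lemma bil_diff_in_R:
  assumes "\<And>G. fm_linear (\<lambda>F. L1 F G)" "\<And>F. fm_linear (\<lambda>G. L1 F G)"
    "\<And>G. fm_linear (\<lambda>F. L2 F G)" "\<And>F. fm_linear (\<lambda>G. L2 F G)"
    "\<And>u v. L1 (wd u) (wd v) - L2 (wd u) (wd v) \<in> R"
  shows "L1 F G - L2 F G \<in> R"
  by (rule fm_linear_diff_in_R[OF assms(1,3)], rule fm_linear_diff_in_R[OF assms(2,4)])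
    (rule assms(5))

lemma fm_linear_diff_in_R_on_pre:
  assumes "fm_linear L1" "fm_linear L2" "L1 (wd []) - L2 (wd []) \<in> R"
    "\<And>x w. L1 (pre x (wd w)) - L2 (pre x (wd w)) \<in> R"
  shows "L1 f - L2 f \<in> R"
proof (rule fm_linear_diff_in_R[OF assms(1,2)])
  fix w show "L1 (wd w) - L2 (wd w) \<in> R"
    using assms(3,4) by (cases w) (simp_all del: pre_wd add: wd_Cons)
qed

lemma fm_linear_diff_in_R_tplus:
  assumes "fm_linear L1" "fm_linear L2" "tplus f"
    "\<And>x w. L1 (pre x (wd w)) - L2 (pre x (wd w)) \<in> R"
  shows "L1 f - L2 f \<in> R"
proof (rule fm_linear_diff_in_R[OF assms(1,2)])
  fix w assume "w \<in> Poly_Mapping.keys f"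
  then have "w \<noteq> []" using assms(3) by (auto simp: tplus_def)
  then show "L1 (wd w) - L2 (wd w) \<in> R"
    using assms(4) by (cases w) (simp_all del: pre_wd add: wd_Cons)
qed

definition linear_mod :: "('a \<Rightarrow> ('a, 'k) fm) \<Rightarrow> bool" where
  "linear_mod h \<longleftrightarrow>
     (\<forall>x y. h (x + y) - h x - h y \<in> R) \<and> (\<forall>r x. h (sc r x) - smul r (h x) \<in> R)"

definition preserves_R :: "(('a, 'k) fm \<Rightarrow> ('a, 'k) fm) \<Rightarrow> bool" where
  "preserves_R L \<longleftrightarrow> (\<forall>x\<in>R. L x \<in> R)"

lemma preserves_RD: "preserves_R L \<Longrightarrow> x \<in> R \<Longrightarrow> L x \<in> R"
  by (simp add: preserves_R_def)

lemma preserves_R_if_multilinear: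
  assumes L: "fm_linear L" and multilin: "\<And>u v. linear_mod (\<lambda>x. L (wd (u @ [x] @ v)))"
  shows "preserves_R L"
  unfolding preserves_R_def
proof
  fix x assume "x \<in> R"
  then show "L x \<in> R"
  proof induction
    case (add_gen u a b v)
    then show ?case using multilin unfolding linear_mod_def by (simp add: fm_linearD[OF L])
  next
    case (scal_gen u r a v)
    then show ?case using multilin unfolding linear_mod_def by (simp add: fm_linearD[OF L])
  next
    case zero then show ?case by (simp add: fm_linearD[OF L] tensor_rel.zero)
  next
    case (plus x y) then show ?case by (simp add: fm_linearD[OF L] R_add)
  next
    case (smult x c) then show ?case by (simp add: fm_linearD[OF L] R_smul)
  qed
qed

lemma linear_mod_wd: "linear_mod (\<lambda>x. wd (u @ [x] @ v))"
  unfolding linear_mod_def using tensor_rel.add_gen tensor_rel.scal_gen by blast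

lemma linear_mod_zero: "linear_mod (\<lambda>x. 0)"
  by (simp add: linear_mod_def tensor_rel.zero)

lemma linear_mod_add:
  assumes "linear_mod h1" "linear_mod h2"
  shows "linear_mod (\<lambda>x. h1 x + h2 x)"
  unfolding linear_mod_def
proof safe
  fix x y
  have "(h1 (x + y) - h1 x - h1 y) + (h2 (x + y) - h2 x - h2 y) \<in> R"
    using assms unfolding linear_mod_def by (blast intro: R_add)
  then show "h1 (x + y) + h2 (x + y) - (h1 x + h2 x) - (h1 y + h2 y) \<in> R"
    by (simp add: algebra_simps)
next
  fix r x
  have "(h1 (sc r x) - smul r (h1 x)) + (h2 (sc r x) - smul r (h2 x)) \<in> R"
    using assms unfolding linear_mod_def by (blast intro: R_add)
  then show "h1 (sc r x) + h2 (sc r x) - smul r (h1 x + h2 x) \<in> R"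
    by (simp add: algebra_simps)
qed

lemma linear_mod_smul:
  assumes "linear_mod h"
  shows "linear_mod (\<lambda>x. smul c (h x))"
  unfolding linear_mod_def
proof safe
  fix x y
  have "smul c (h (x + y) - h x - h y) \<in> R"
    using assms unfolding linear_mod_def by (blast intro: R_smul)
  then show "smul c (h (x + y)) - smul c (h x) - smul c (h y) \<in> R" by simp
next
  fix r x
  have "smul c (h (sc r x) - smul r (h x)) \<in> R"
    using assms unfolding linear_mod_def by (blast intro: R_smul)
  then show "smul c (h (sc r x)) - smul r (smul c (h x)) \<in> R" by (simp add: mult.commute)
qed

lemma linear_mod_comp_preserves_R:
  assumes L: "fm_linear L" "preserves_R L" and h: "linear_mod h"
  shows "linear_mod (\<lambda>x. L (h x))"
  unfolding linear_mod_def
proof safe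
  fix x y
  have "L (h (x + y) - h x - h y) \<in> R"
    using h unfolding linear_mod_def by (blast intro: preserves_RD[OF L(2)])
  then show "L (h (x + y)) - L (h x) - L (h y) \<in> R" by (simp add: fm_linearD[OF L(1)])
next
  fix r x
  have "L (h (sc r x) - smul r (h x)) \<in> R"
    using h unfolding linear_mod_def by (blast intro: preserves_RD[OF L(2)])
  then show "L (h (sc r x)) - smul r (L (h x)) \<in> R" by (simp add: fm_linearD[OF L(1)])
qed

lemma linear_mod_lin:
  assumes "\<And>v. linear_mod (\<lambda>x. H x v)"
  shows "linear_mod (\<lambda>x. lin (H x) G)"
  unfolding linear_mod_def
proof safe
  fix x y
  have "lin (\<lambda>v. H (x + y) v - H x v - H y v) G \<in> R"
    by (rule R_lin) (use assms in \<open>simp add: linear_mod_def\<close>)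
  then show "lin (H (x + y)) G - lin (H x) G - lin (H y) G \<in> R"
    by (simp add: lin_fun_diff)
next
  fix r x
  have "lin (\<lambda>v. H (sc r x) v - smul r (H x v)) G \<in> R"
    by (rule R_lin) (use assms in \<open>simp add: linear_mod_def\<close>)
  then show "lin (H (sc r x)) G - smul r (lin (H x) G) \<in> R"
    by (simp add: lin_fun_diff lin_fun_smul)
qed

lemma linear_mod_comp_linear:
  assumes "\<And>x y. g (x + y) = g x + g y" "\<And>r x. g (sc r x) = sc r (g x)" "linear_mod h"
  shows "linear_mod (\<lambda>x. h (g x))"
  using assms unfolding linear_mod_def by simp

lemma preserves_R_pre: "preserves_R (pre a)"
  by (rule preserves_R_if_multilinear[OF fm_linear_pre])
    (use linear_mod_wd[of "a # _"] in simp)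

lemma linear_mod_pre: "linear_mod h \<Longrightarrow> linear_mod (\<lambda>x. pre a (h x))"
  by (rule linear_mod_comp_preserves_R[OF fm_linear_pre preserves_R_pre])

lemma linear_mod_pre_letter: "linear_mod (\<lambda>x. pre x F)"
  unfolding pre_def by (rule linear_mod_lin) (use linear_mod_wd[of "[]"] in simp)

lemma pre_letter_add: "pre (x + y) F - pre x F - pre y F \<in> R"
  using linear_mod_pre_letter[of F] unfolding linear_mod_def by blast

lemma pre_letter_sc: "pre (sc r x) F - smul r (pre x F) \<in> R"
  using linear_mod_pre_letter[of F] unfolding linear_mod_def by blast

lemma pre_letter_linear_comb:
  "pre (x + y + sc l z) F - (pre x F + pre y F + smul l (pre z F)) \<in> R"
proof -
  have "(pre (x + y + sc l z) F - pre (x + y) F - pre (sc l z) F) +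
        (pre (x + y) F - pre x F - pre y F) + (pre (sc l z) F - smul l (pre z F)) \<in> R"
    by (intro R_add pre_letter_add pre_letter_sc)
  then show ?thesis by (simp add: algebra_simps)
qed

lemma pre_letter_decomp:
  assumes "c = c1 + c2 + sc l c3"
  obtains \<rho> where "\<And>Z. pre c Z = pre c1 Z + pre c2 Z + smul l (pre c3 Z) + \<rho> Z"
    and "\<And>Z. \<rho> Z \<in> R"
proof
  let ?\<rho> = "\<lambda>Z. pre c Z - (pre c1 Z + pre c2 Z + smul l (pre c3 Z))"
  show "pre c Z = pre c1 Z + pre c2 Z + smul l (pre c3 Z) + ?\<rho> Z" for Z by simp
  show "?\<rho> Z \<in> R" for Z unfolding assms by (rule pre_letter_linear_comb)
qed

lemma teq_iff: "teq sc x y \<longleftrightarrow> x - y \<in> R"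
  by (simp add: teq_def)

lemma teq_refl [simp]: "teq sc x x"
  by (simp add: teq_def tensor_rel.zero)

lemma teq_sym: "teq sc x y \<Longrightarrow> teq sc y x"
  unfolding teq_def using R_minus by fastforce

lemma teq_map: "fm_linear L \<Longrightarrow> preserves_R L \<Longrightarrow> teq sc x y \<Longrightarrow> teq sc (L x) (L y)"
  unfolding teq_def by (metis fm_linearD(5) preserves_RD)

lemma teq_map2:
  assumes "\<And>G. fm_linear (\<lambda>F. f F G)" "\<And>F. fm_linear (\<lambda>G. f F G)"
    "\<And>G. preserves_R (\<lambda>F. f F G)" "\<And>F. preserves_R (\<lambda>G. f F G)"
    "teq sc a a'" "teq sc b b'"
  shows "teq sc (f a b) (f a' b')"
proof -
  have "f a b - f a' b' = f (a - a') b + f a' (b - b')"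
    using fm_linearD(5)[OF assms(1)] fm_linearD(5)[OF assms(2)] by simp
  moreover have "f (a - a') b \<in> R" "f a' (b - b')  \<in> R"
    using preserves_RD[OF assms(3)] preserves_RD[OF assms(4)] assms(5,6) by (simp_all add: teq_iff)
  ultimately show ?thesis unfolding teq_iff by (simp add: R_add)
qed

section \<open>The quasi-shuffle product\<close>

abbreviation "Q \<equiv> bil (qsh sc q)"

lemma linear_mod_qsh: "linear_mod (\<lambda>x. qsh sc q (u1 @ [x] @ u2) w)"
proof (induction w arbitrary: u1)
  case Nil
  then show ?case using linear_mod_wd[of u1 u2] by simp
next
  case (Cons b v)
  note IHv = Cons.IH
  show ?case
  proof (induction u1)
    case Nil
    have "linear_mod (\<lambda>x. pre (sc q (x * b)) (qsh sc q u2 v))"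
      by (rule linear_mod_comp_linear[OF _ _ linear_mod_pre_letter])
        (simp_all add: sc_add distrib_right sc_mult sc_sc)
    then have "linear_mod (\<lambda>x. pre x (qsh sc q u2 (b # v)) + pre b (qsh sc q (x # u2) v) +
              pre (sc q (x * b)) (qsh sc q u2 v))"
      by (intro linear_mod_add linear_mod_pre_letter linear_mod_pre IHv[of "[]", simplified])
    then show ?case by simp
  next
    case (Cons a u1')
    have "linear_mod (\<lambda>x. pre a (qsh sc q (u1' @ [x] @ u2) (b # v)) +
            pre b (qsh sc q (a # u1' @ [x] @ u2) v) +
            pre (sc q (a * b)) (qsh sc q (u1' @ [x] @ u2) v))"
      using IHv[of "a # u1'"] by (intro linear_mod_add linear_mod_pre Cons.IH IHv) simp_all
    then show ?case by simp
  qed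
qed

lemma Q_comm: "Q F G = Q G F"
  by (subst bil_swap) (simp add: qsh_comm)

lemma Q_unit_left [simp]: "Q (wd []) G = G"
proof -
  have "qsh sc q [] = wd" by (rule ext) simp
  then show ?thesis by (simp add: bil_eq_lin lin_wd_eq)
qed

lemma Q_unit_right [simp]: "Q G (wd []) = G"
  by (subst Q_comm) simp

lemma Q_pre: "Q (pre a F) (pre b G) =
   pre a (Q F (pre b G)) + pre b (Q (pre a F) G) + pre (sc q (a * b)) (Q F G)"
  by (rule bil_eqI[of "\<lambda>F G. Q (pre a F) (pre b G)"
        "\<lambda>F G. pre a (Q F (pre b G)) + pre b (Q (pre a F) G) + pre (sc q (a * b)) (Q F G)"])
     (intro fm_linear_bil1 fm_linear_bil2 fm_linear_pre_comp fm_linear_add fm_linear_id | simp)+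

lemma preserves_R_bil1:
  assumes "\<And>v' u v. linear_mod (\<lambda>z. G (u @ [z] @ v) v')"
  shows "preserves_R (\<lambda>F. bil G F H)"
proof (rule preserves_R_if_multilinear)
  show "fm_linear (\<lambda>F. bil G F H)" by (intro fm_linear_bil1 fm_linear_id)
  show "linear_mod (\<lambda>x. bil G (wd (u @ [x] @ v)) H)" for u v
    unfolding bil_eq_lin lin_wd by (rule linear_mod_lin) (rule assms)
qed

lemma preserves_R_Q1: "preserves_R (\<lambda>F. Q F G)"
  by (rule preserves_R_bil1) (rule linear_mod_qsh)

lemma preserves_R_Q2: "preserves_R (\<lambda>F. Q G F)"
  using preserves_R_Q1 by (subst Q_comm)

lemma sc_q_assoc: "sc q (sc q (a * b) * c) = sc q (a * sc q (b * c))"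
  by (simp add: sc_mult[symmetric] sc_mult2[symmetric] mult.assoc)

lemma Q_assoc_words: "Q (Q (wd u) (wd v)) (wd w) = Q (wd u) (Q (wd v) (wd w))"
proof (induction "length u + length v + length w" arbitrary: u v w rule: less_induct)
  case less
  show ?case
  proof (cases "u = [] \<or> v = [] \<or> w = []")
    case True then show ?thesis by auto
  next
    case False
    then obtain a u' b v' c w' where uvw: "u = a # u'" "v = b # v'" "w = c # w'"
      by (meson list.exhaust)
    have IH: "Q (Q (wd x) (wd y)) (wd z) = Q (wd x) (Q (wd y) (wd z))"
      if "length x + length y + length z < length u + length v + length w" for x y z
      using less that by blast
    show ?thesis
      using IH[of u' v w] IH[of u v' w] IH[of u' v' w] IH[of u v w', symmetric]
        IH[of u' v w'] IH[of u v' w'] IH[of u' v' w']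
      unfolding uvw by (simp del: pre_wd add: wd_Cons Q_pre sc_q_assoc add_ac)
  qed
qed

lemma Q_assoc: "Q (Q F G) H = Q F (Q G H)"
proof (rule fm_linear_eqI[of "\<lambda>H. Q (Q F G) H" "\<lambda>H. Q F (Q G H)"];
    (intro fm_linear_bil2 fm_linear_id)?)
  show "Q (Q F G) (wd w) = Q F (Q G (wd w))" for w
    by (rule bil_eqI[of "\<lambda>F G. Q (Q F G) (wd w)" "\<lambda>F G. Q F (Q G (wd w))"];
        intro fm_linear_bil1 fm_linear_bil2 fm_linear_id Q_assoc_words)
qed

section \<open>The three operations\<close>

abbreviation "pr \<equiv> precA sc q"
abbreviation "su \<equiv> succA sc q"
abbreviation "bu \<equiv> bulA sc q"

lemma fm_linear_pr1: "fm_linear H \<Longrightarrow> fm_linear (\<lambda>x. pr (H x) G)"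
  unfolding precA_def by (rule fm_linear_bil1)
lemma fm_linear_pr2: "fm_linear H \<Longrightarrow> fm_linear (\<lambda>x. pr F (H x))"
  unfolding precA_def by (rule fm_linear_bil2)
lemma fm_linear_su1: "fm_linear H \<Longrightarrow> fm_linear (\<lambda>x. su (H x) G)"
  unfolding succA_def by (rule fm_linear_bil1)
lemma fm_linear_su2: "fm_linear H \<Longrightarrow> fm_linear (\<lambda>x. su F (H x))"
  unfolding succA_def by (rule fm_linear_bil2)
lemma fm_linear_bu1: "fm_linear H \<Longrightarrow> fm_linear (\<lambda>x. bu (H x) G)"
  unfolding bulA_def by (rule fm_linear_bil1)
lemma fm_linear_bu2: "fm_linear H \<Longrightarrow> fm_linear (\<lambda>x. bu F (H x))"
  unfolding bulA_def by (rule fm_linear_bil2)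

lemmas fm_linear_intros = fm_linear_id fm_linear_add fm_linear_smul
  fm_linear_bil1 fm_linear_bil2 fm_linear_pre_comp fm_linear_lin_comp
  fm_linear_pr1 fm_linear_pr2 fm_linear_su1 fm_linear_su2 fm_linear_bu1 fm_linear_bu2

lemma pr_zero1 [simp]: "pr 0 G = 0" unfolding precA_def by simp
lemma su_zero2 [simp]: "su F 0 = 0" unfolding succA_def by simp
lemma bu_zero1 [simp]: "bu 0 G = 0" unfolding bulA_def by simp
lemma bu_zero2 [simp]: "bu F 0 = 0" unfolding bulA_def by simp
lemma pr_add1 [simp]: "pr (F1 + F2) G = pr F1 G + pr F2 G" unfolding precA_def by simp
lemma pr_add2 [simp]: "pr F (G1 + G2) = pr F G1 + pr F G2" unfolding precA_def by simp
lemma bu_add1 [simp]: "bu (F1 + F2) G = bu F1 G + bu F2 G" unfolding bulA_def by simp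
lemma bu_add2 [simp]: "bu F (G1 + G2) = bu F G1 + bu F G2" unfolding bulA_def by simp
lemma pr_smul1 [simp]: "pr (smul c F) G = smul c (pr F G)" unfolding precA_def by simp
lemma pr_smul2 [simp]: "pr F (smul c G) = smul c (pr F G)" unfolding precA_def by simp
lemma bu_smul1 [simp]: "bu (smul c F) G = smul c (bu F G)" unfolding bulA_def by simp
lemma bu_smul2 [simp]: "bu F (smul c G) = smul c (bu F G)" unfolding bulA_def by simp

lemma pr_pre: "pr (pre x F) G = pre x (Q F G)"
  unfolding precA_def
  by (rule bil_eqI[of "\<lambda>F G. bil (prec_w sc q) (pre x F) G" "\<lambda>F G. pre x (Q F G)"];
      (intro fm_linear_intros)?)
    simp_all

lemma su_pre: "su F (pre y G) = pre y (Q F G)"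
  unfolding succA_def
  by (rule bil_eqI[of "\<lambda>F G. bil (succ_w sc q) F (pre y G)" "\<lambda>F G. pre y (Q F G)"];
      (intro fm_linear_intros)?)
    simp_all

lemma bu_pre: "bu (pre x F) (pre y G) = pre (x * y) (Q F G)"
  unfolding bulA_def
  by (rule bil_eqI[of "\<lambda>F G. bil (bul_w sc q) (pre x F) (pre y G)" "\<lambda>F G. pre (x * y) (Q F G)"];
      (intro fm_linear_intros)?)
    simp_all

lemma pr_Nil: "pr (wd []) G = 0"
proof -
  have "prec_w sc q [] = (\<lambda>v. 0)" by (rule ext) simp
  then show ?thesis unfolding precA_def bil_eq_lin by simp
qed

lemma su_Nil: "su F (wd []) = 0"
  unfolding succA_def bil_eq_lin by simp

lemma bu_Nil1: "bu (wd []) G = 0"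
proof -
  have "bul_w sc q [] = (\<lambda>v. 0)" by (rule ext) simp
  then show ?thesis unfolding bulA_def bil_eq_lin by simp
qed

lemma bu_Nil2: "bu F (wd []) = 0"
proof -
  have "bul_w sc q w [] = 0" for w by (cases w) auto
  then show ?thesis unfolding bulA_def bil_eq_lin by simp
qed

lemma su_eq_pr_swap: "su F G = pr G F"
proof -
  have "succ_w sc q v w = prec_w sc q w v" for w v
    by (cases w) (simp_all add: qsh_comm)
  then show ?thesis unfolding succA_def precA_def by (subst bil_swap) simp
qed

lemma bul_w_comm: "bul_w sc q v w = bul_w sc q w v"
  by (cases w; cases v) (simp_all add: qsh_comm mult.commute)

lemma bu_comm: "bu F G = bu G F"
proof -
  have "(\<lambda>w v. bul_w sc q v w) = bul_w sc q"
    by (intro ext) (rule bul_w_comm)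
  then show ?thesis unfolding bulA_def by (subst bil_swap) simp
qed

lemma tplus_pr: "tplus (pr a b)"
  unfolding precA_def bil_eq_lin
proof (intro tplus_lin)
  fix w v show "tplus (prec_w sc q w v)" by (cases w) (simp_all add: tplus_pre tplus_zero)
qed

lemma tplus_su: "tplus (su a b)"
  by (simp add: su_eq_pr_swap tplus_pr)

lemma tplus_bu: "tplus (bu a b)"
  unfolding bulA_def bil_eq_lin
proof (intro tplus_lin)
  fix w v show "tplus (bul_w sc q w v)" by (cases w; cases v) (simp_all add: tplus_pre tplus_zero)
qed

lemma preserves_R_pr1: "preserves_R (\<lambda>F. pr F G)"
  unfolding precA_def
proof (rule preserves_R_bil1)
  show "linear_mod (\<lambda>z. prec_w sc q (u @ [z] @ v) v')" for v' u v
    by (cases u) (simp_all add: linear_mod_pre_letter linear_mod_pre linear_mod_qsh[simplified])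
qed

lemma preserves_R_pr2: "preserves_R (\<lambda>G. pr F G)"
  unfolding preserves_R_def
proof
  fix x assume x: "x \<in> R"
  have "pr F x = lin (\<lambda>w. pr (wd w) x) F"
    by (rule fm_linear_eq_lin) (intro fm_linear_intros)
  also have "\<dots> \<in> R"
  proof (rule R_lin)
    fix w show "pr (wd w) x \<in> R"
      using preserves_RD[OF preserves_R_pre preserves_RD[OF preserves_R_Q2 x]]
      by (cases w) (simp_all add: pr_Nil tensor_rel.zero wd_Cons pr_pre del: pre_wd)
  qed
  finally show "pr F x \<in> R" .
qed

lemma preserves_R_bu1: "preserves_R (\<lambda>F. bu F G)"
  unfolding bulA_def
proof (rule preserves_R_bil1)
  fix v' u v
  show "linear_mod (\<lambda>z. bul_w sc q (u @ [z] @ v) v')"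
  proof (cases v')
    case Nil then show ?thesis by (cases u) (simp_all add: linear_mod_zero)
  next
    case (Cons b v'')
    have "linear_mod (\<lambda>z. pre (z * b) (qsh sc q v v''))"
      by (rule linear_mod_comp_linear[OF _ _ linear_mod_pre_letter])
        (simp_all add: distrib_right sc_mult)
    then show ?thesis
      using Cons by (cases u) (simp_all add: linear_mod_pre linear_mod_qsh[simplified])
  qed
qed

lemma preserves_R_bu2: "preserves_R (\<lambda>G. bu F G)"
  using preserves_R_bu1 by (subst bu_comm)

lemma teq_pr: "teq sc a a' \<Longrightarrow> teq sc b b' \<Longrightarrow> teq sc (pr a b) (pr a' b')"
  by (rule teq_map2; (intro fm_linear_intros preserves_R_pr1 preserves_R_pr2)?)

lemma teq_su: "teq sc a a' \<Longrightarrow> teq sc b b' \<Longrightarrow> teq sc (su a b) (su a' b')"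
  unfolding su_eq_pr_swap by (rule teq_pr)

lemma teq_bu: "teq sc a a' \<Longrightarrow> teq sc b b' \<Longrightarrow> teq sc (bu a b) (bu a' b')"
  by (rule teq_map2; (intro fm_linear_intros preserves_R_bu1 preserves_R_bu2)?)

text \<open>Only here is the hypothesis \<open>T\<^sup>+\<close> needed: on the empty word \<open>Q\<close> is the identity while all
  three operations vanish.\<close>

lemma star_teq_Q:
  assumes "tplus b" "tplus c"
  shows "teq sc (pr b c + su b c + smul q (bu b c)) (Q b c)"
  unfolding teq_iff
proof (rule fm_linear_diff_in_R_tplus[OF _ _ assms(1)]; (intro fm_linear_intros)?)
  fix x w
  show "pr (pre x (wd w)) c + su (pre x (wd w)) c + smul q (bu (pre x (wd w)) c)
      - Q (pre x (wd w)) c \<in> R"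
  proof (rule fm_linear_diff_in_R_tplus[OF _ _ assms(2)]; (intro fm_linear_intros)?)
    fix y v
    have "smul q (pre (x * y) (Q (wd w) (wd v))) - pre (sc q (x * y)) (Q (wd w) (wd v)) \<in> R"
      using R_minus[OF pre_letter_sc] by simp
    then show "pr (pre x (wd w)) (pre y (wd v)) + su (pre x (wd w)) (pre y (wd v)) +
        smul q (bu (pre x (wd w)) (pre y (wd v))) - Q (pre x (wd w)) (pre y (wd v)) \<in> R"
      by (simp only: pr_pre su_pre bu_pre Q_pre) (simp add: algebra_simps)
  qed
qed

lemma pr_pr: "pr (pr a b) c = pr a (Q b c)"
  by (rule fm_linear_eq_on_pre[of "\<lambda>a. pr (pr a b) c" "\<lambda>a. pr a (Q b c)"];
      (intro fm_linear_intros)?)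
    (auto simp: pr_Nil pr_pre Q_assoc simp del: pre_wd)

lemma su_Q: "su (Q a b) c = su a (su b c)"
  by (rule fm_linear_eq_on_pre[of "\<lambda>c. su (Q a b) c" "\<lambda>c. su a (su b c)"];
      (intro fm_linear_intros)?)
    (auto simp: su_Nil su_pre Q_assoc simp del: pre_wd)

lemma pr_su: "pr (su a b) c = su a (pr b c)"
  by (rule fm_linear_eq_on_pre[of "\<lambda>b. pr (su a b) c" "\<lambda>b. su a (pr b c)"];
      (intro fm_linear_intros)?)
    (auto simp: su_Nil pr_Nil pr_pre su_pre Q_assoc simp del: pre_wd)

lemma bu_su: "bu (su a b) c = su a (bu b c)"
proof (rule fm_linear_eq_on_pre[of "\<lambda>b. bu (su a b) c" "\<lambda>b. su a (bu b c)"];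
    (intro fm_linear_intros)?)
  fix y w
  show "bu (su a (pre y (wd w))) c = su a (bu (pre y (wd w)) c)"
    unfolding su_pre
    by (rule fm_linear_eq_on_pre[of "\<lambda>c. bu (pre y (Q a (wd w))) c"
          "\<lambda>c. su a (bu (pre y (wd w)) c)"];
        (intro fm_linear_intros)?)
      (auto simp: bu_Nil2 bu_pre su_pre Q_assoc simp del: pre_wd)
qed (auto simp: su_Nil bu_Nil1 simp del: pre_wd)

lemma bu_pr: "bu (pr a b) c = bu a (su b c)"
proof (rule fm_linear_eq_on_pre[of "\<lambda>a. bu (pr a b) c" "\<lambda>a. bu a (su b c)"];
    (intro fm_linear_intros)?)
  fix x w
  show "bu (pr (pre x (wd w)) b) c = bu (pre x (wd w)) (su b c)"
    unfolding pr_pre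
    by (rule fm_linear_eq_on_pre[of "\<lambda>c. bu (pre x (Q (wd w) b)) c"
          "\<lambda>c. bu (pre x (wd w)) (su b c)"];
        (intro fm_linear_intros)?)
      (auto simp: bu_Nil2 bu_pre su_pre su_Nil Q_assoc simp del: pre_wd)
qed (auto simp: pr_Nil bu_Nil1 simp del: pre_wd)

lemma pr_bu: "pr (bu a b) c = bu a (pr b c)"
proof (rule fm_linear_eq_on_pre[of "\<lambda>a. pr (bu a b) c" "\<lambda>a. bu a (pr b c)"];
    (intro fm_linear_intros)?)
  fix x w
  show "pr (bu (pre x (wd w)) b) c = bu (pre x (wd w)) (pr b c)"
    by (rule fm_linear_eq_on_pre[of "\<lambda>b. pr (bu (pre x (wd w)) b) c"
          "\<lambda>b. bu (pre x (wd w)) (pr b c)"];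
        (intro fm_linear_intros)?)
      (auto simp: bu_Nil2 bu_pre pr_pre pr_Nil Q_assoc simp del: pre_wd bil_wd)
qed (auto simp: pr_Nil bu_Nil1 simp del: pre_wd)

lemma bu_bu: "bu (bu a b) c = bu a (bu b c)"
proof (rule fm_linear_eq_on_pre[of "\<lambda>a. bu (bu a b) c" "\<lambda>a. bu a (bu b c)"];
    (intro fm_linear_intros)?)
  fix x w
  show "bu (bu (pre x (wd w)) b) c = bu (pre x (wd w)) (bu b c)"
  proof (rule fm_linear_eq_on_pre[of "\<lambda>b. bu (bu (pre x (wd w)) b) c"
        "\<lambda>b. bu (pre x (wd w)) (bu b c)"];
      (intro fm_linear_intros)?)
    fix y v
    show "bu (bu (pre x (wd w)) (pre y (wd v))) c = bu (pre x (wd w)) (bu (pre y (wd v)) c)"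
      unfolding bu_pre
      by (rule fm_linear_eq_on_pre[of "\<lambda>c. bu (pre (x * y) (Q (wd w) (wd v))) c"
            "\<lambda>c. bu (pre x (wd w)) (bu (pre y (wd v)) c)"]; (intro fm_linear_intros)?)
      (auto simp: bu_Nil2 bu_pre Q_assoc mult.assoc simp del: pre_wd bil_wd)
  qed (auto simp: bu_Nil1 bu_Nil2 simp del: pre_wd)
qed (auto simp: bu_Nil1 simp del: pre_wd)

lemma pr_pr_teq:
  assumes "tplus b" "tplus c"
  shows "teq sc (pr (pr a b) c) (pr a (pr b c + su b c + smul q (bu b c)))"
  unfolding pr_pr
  by (rule teq_sym, rule teq_map[OF _ preserves_R_pr2 star_teq_Q[OF assms]])
    (intro fm_linear_intros)

lemma su_star_teq:
  assumes "tplus a" "tplus b"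
  shows "teq sc (su (pr a b + su a b + smul q (bu a b)) c) (su a (su b c))"
proof -
  have "teq sc (su (pr a b + su a b + smul q (bu a b)) c) (su (Q a b) c)"
    unfolding su_eq_pr_swap[of _ c]
    by (rule teq_map[OF _ preserves_R_pr2 star_teq_Q[OF assms]]) (intro fm_linear_intros)
  then show ?thesis unfolding su_Q .
qed

end

section \<open>The derivation\<close>

primrec dA_rec :: "'k::comm_ring_1 \<Rightarrow> ('a \<Rightarrow> 'a) \<Rightarrow> 'a list \<Rightarrow> ('a, 'k) fm" where
  "dA_rec lam d0 [] = 0"
| "dA_rec lam d0 (x # w) =
     wd (d0 x # w) + pre x (dA_rec lam d0 w) + smul lam (pre (d0 x) (dA_rec lam d0 w))"

definition map_at :: "('a \<Rightarrow> 'a) \<Rightarrow> nat set \<Rightarrow> 'a list \<Rightarrow> 'a list" where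
  "map_at f S w = map (\<lambda>i. if i \<in> S then f (w ! i) else w ! i) [0..<length w]"

lemma map_at_empty: "map_at f {} w = w"
  unfolding map_at_def by (simp add: map_nth)

lemma map_at_Suc: "map_at f (Suc ` T) (x # w) = x # map_at f T w"
  unfolding map_at_def by (simp add: map_upt_Suc del: upt_Suc) (auto simp: image_iff)

lemma map_at_insert_0: "map_at f (insert 0 (Suc ` T)) (x # w) = f x # map_at f T w"
  unfolding map_at_def by (simp add: map_upt_Suc del: upt_Suc) (auto simp: image_iff)

lemma dA_w_map_at:
  "dA_w lam d0 w =
     (\<Sum>S\<in>Pow {0..<length w} - {{}}. smul (lam ^ (card S - 1)) (wd (map_at d0 S w)))"
  unfolding dA_w_def map_at_def by simp

lemma Pow_atLeastLessThan_Suc: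
  "Pow {0..<Suc n} - {{}} =
     image Suc ` (Pow {0..<n} - {{}}) \<union> (\<lambda>T. insert 0 (Suc ` T)) ` Pow {0..<n}"
proof (rule set_eqI, rule iffI)
  fix S assume S: "S \<in> Pow {0..<Suc n} - {{}}"
  define T where "T = {i. Suc i \<in> S}"
  have T: "T \<in> Pow {0..<n}" using S by (auto simp: T_def)
  show "S \<in> image Suc ` (Pow {0..<n} - {{}}) \<union> (\<lambda>T. insert 0 (Suc ` T)) ` Pow {0..<n}"
  proof (cases "0 \<in> S")
    case True
    then have "S = insert 0 (Suc ` T)"
      by (auto simp: T_def image_iff) (metis not0_implies_Suc)
    then show ?thesis using T by blast
  next
    case False
    then have S_eq: "S = Suc ` T"
      by (auto simp: T_def image_iff) (metis not0_implies_Suc)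
    then have "T \<noteq> {}" using S by auto
    then show ?thesis using T S_eq by blast
  qed
qed auto

lemma inj_on_insert_0_Suc: "inj_on (\<lambda>T. insert 0 (Suc ` T)) X"
proof (rule inj_onI)
  fix T1 T2 :: "nat set" assume "insert 0 (Suc ` T1) = insert 0 (Suc ` T2)"
  then have "Suc ` T1 = Suc ` T2"
    by (metis Zero_not_Suc image_iff insert_eq_iff)
  then show "T1 = T2" by (simp add: inj_image_eq_iff)
qed

lemma dA_w_sum_without_0:
  "(\<Sum>S\<in>image Suc ` (Pow {0..<length w} - {{}}).
      smul (lam ^ (card S - 1)) (wd (map_at d0 S (x # w)))) = pre x (dA_w lam d0 w)"
proof -
  have "inj_on (image Suc) X" for X :: "nat set set"
    by (meson inj_Suc inj_image_eq_iff inj_onI)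
  then show ?thesis
    by (simp add: sum.reindex map_at_Suc card_image dA_w_map_at
        fm_linear_sum[OF fm_linear_pre])
qed

lemma dA_w_sum_with_0:
  "(\<Sum>S\<in>(\<lambda>T. insert 0 (Suc ` T)) ` Pow {0..<length w}.
      smul (lam ^ (card S - 1)) (wd (map_at d0 S (x # w))))
   = wd (d0 x # w) + smul lam (pre (d0 x) (dA_w lam d0 w))"
  (is "?lhs = _")
proof -
  let ?g = "\<lambda>T. smul (lam ^ card T) (wd (d0 x # map_at d0 T w))"
  have card: "card (insert 0 (Suc ` T)) = Suc (card T)" if "T \<in> Pow {0..<length w}" for T
    using that finite_subset[of T] by (auto simp: card_image image_iff)
  have "?lhs = (\<Sum>T\<in>Pow {0..<length w}. ?g T)"
    by (simp add: sum.reindex[OF inj_on_insert_0_Suc] card map_at_insert_0)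
  also have "\<dots> = ?g {} + (\<Sum>T\<in>Pow {0..<length w} - {{}}. ?g T)"
    by (rule sum.remove) auto
  also have "(\<Sum>T\<in>Pow {0..<length w} - {{}}. ?g T) =
      (\<Sum>T\<in>Pow {0..<length w} - {{}}.
         smul lam (pre (d0 x) (smul (lam ^ (card T - 1)) (wd (map_at d0 T w)))))"
  proof (rule sum.cong)
    fix T assume "T \<in> Pow {0..<length w} - {{}}"
    then have "finite T" "T \<noteq> {}" by (auto intro: finite_subset)
    then have "card T = Suc (card T - 1)" by (simp add: card_gt_0_iff)
    then have "lam ^ card T = lam * lam ^ (card T - 1)" by (metis power_Suc)
    then show "?g T = smul lam (pre (d0 x) (smul (lam ^ (card T - 1)) (wd (map_at d0 T w))))"
      by simp
  qed simp
  also have "\<dots> = smul lam (pre (d0 x) (dA_w lam d0 w))"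
    by (simp only: dA_w_map_at fm_linear_sum[OF fm_linear_pre] smul_sum)
  finally show ?thesis by (simp add: map_at_empty)
qed

lemma dA_w_Cons:
  "dA_w lam d0 (x # w) =
     wd (d0 x # w) + pre x (dA_w lam d0 w) + smul lam (pre (d0 x) (dA_w lam d0 w))"
proof -
  let ?f = "\<lambda>S. smul (lam ^ (card S - 1)) (wd (map_at d0 S (x # w)))"
  let ?A = "image Suc ` (Pow {0..<length w} - {{}})"
  let ?B = "(\<lambda>T. insert 0 (Suc ` T)) ` Pow {0..<length w}"
  have "dA_w lam d0 (x # w) = sum ?f (?A \<union> ?B)"
    by (simp add: dA_w_map_at Pow_atLeastLessThan_Suc del: upt_Suc)
  also have "\<dots> = sum ?f ?A + sum ?f ?B"
    by (rule sum.union_disjoint) auto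
  also have "\<dots> = pre x (dA_w lam d0 w) + (wd (d0 x # w) + smul lam (pre (d0 x) (dA_w lam d0 w)))"
    unfolding dA_w_sum_without_0 dA_w_sum_with_0 ..
  finally show ?thesis by (simp add: add_ac)
qed

lemma dA_w_eq_dA_rec: "dA_w lam d0 w = dA_rec lam d0 w"
  by (induction w) (simp add: dA_w_def, simp add: dA_w_Cons)

lemma tplus_dA: "tplus (dA lam d0 a)"
  unfolding dA_def
proof (intro tplus_lin)
  fix w
  have "tplus (dA_rec lam d0 w)"
  proof (cases w)
    case Nil then show ?thesis by (simp add: tplus_zero)
  next
    case (Cons a w')
    have "tplus (wd (d0 a # w'))" by (simp add: tplus_iff lookup_wd)
    then show ?thesis unfolding Cons dA_rec.simps by (intro tplus_add tplus_smul tplus_pre)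
  qed
  then show "tplus (dA_w lam d0 w)" by (simp add: dA_w_eq_dA_rec)
qed

locale diff_tensor_algebra = tensor_algebra sc q
  for sc :: "'k::comm_ring_1 \<Rightarrow> 'a::comm_ring \<Rightarrow> 'a" and q :: 'k +
  fixes lam :: 'k and d0 :: "'a \<Rightarrow> 'a"
  assumes diff: "diff_weight sc lam d0"
begin

lemma d0_add: "d0 (a + b) = d0 a + d0 b"
  using diff by (simp add: diff_weight_def)

lemma d0_sc: "d0 (sc r a) = sc r (d0 a)"
  using diff by (simp add: diff_weight_def)

lemma d0_mult: "d0 (a * b) = d0 a * b + a * d0 b + sc lam (d0 a * d0 b)"
  using diff by (simp add: diff_weight_def)

abbreviation "D \<equiv> dA lam d0"

lemma D_wd: "D (wd w) = dA_rec lam d0 w"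
  unfolding dA_def by (simp add: dA_w_eq_dA_rec)

lemma fm_linear_D_comp: "fm_linear H \<Longrightarrow> fm_linear (\<lambda>x. D (H x))"
  unfolding dA_def by (rule fm_linear_lin_comp)

lemmas fm_linear_D_intros = fm_linear_intros fm_linear_D_comp

lemma D_add [simp]: "D (F + G) = D F + D G" by (simp add: dA_def)
lemma D_smul [simp]: "D (smul c F) = smul c (D F)" by (simp add: dA_def)
lemma D_zero [simp]: "D 0 = 0" by (simp add: dA_def)

lemma D_pre: "D (pre a F) = pre (d0 a) (F + smul lam (D F)) + pre a (D F)"
  by (rule fm_linear_eqI[of "\<lambda>F. D (pre a F)" "\<lambda>F. pre (d0 a) (F + smul lam (D F)) + pre a (D F)"];
      (intro fm_linear_D_intros)?)
    (auto simp: D_wd)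

lemma linear_mod_dA_rec: "linear_mod (\<lambda>x. dA_rec lam d0 (u @ [x] @ v))"
proof (induction u)
  case Nil
  have "linear_mod (\<lambda>x. wd (d0 x # v))"
    using linear_mod_comp_linear[OF _ _ linear_mod_wd[of "[]" v], of d0]
    by (simp add: d0_add d0_sc)
  moreover have "linear_mod (\<lambda>x. pre (d0 x) (dA_rec lam d0 v))"
    by (rule linear_mod_comp_linear[OF _ _ linear_mod_pre_letter]) (simp_all add: d0_add d0_sc)
  ultimately show ?case
    by (simp add: linear_mod_add linear_mod_smul linear_mod_pre_letter)
next
  case (Cons a u)
  then show ?case
    using linear_mod_wd[of "d0 a # u" v]
    by (simp add: linear_mod_add linear_mod_smul linear_mod_pre)
qed

lemma preserves_R_D: "preserves_R D"
proof (rule preserves_R_if_multilinear)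
  show "fm_linear D" by (simp add: dA_def)
  show "linear_mod (\<lambda>x. D (wd (u @ [x] @ v)))" for u v
    unfolding D_wd by (rule linear_mod_dA_rec)
qed

definition Q_leibniz_mod :: "('a, 'k) fm \<Rightarrow> ('a, 'k) fm \<Rightarrow> bool" where
  "Q_leibniz_mod F G \<longleftrightarrow> D (Q F G) - (Q (D F) G + Q (F + smul lam (D F)) (D G)) \<in> R"

lemma d0_sc_q_mult:
  "d0 (sc q (a * b)) = sc q (d0 a * b) + sc q (a * d0 b) + sc lam (sc q (d0 a * d0 b))"
  by (simp add: d0_sc d0_mult sc_add sc_sc)

lemma Q_leibniz_mod_pre:
  assumes "Q_leibniz_mod X (pre b Y)" "Q_leibniz_mod (pre a X) Y" "Q_leibniz_mod X Y"
  shows "Q_leibniz_mod (pre a X) (pre b Y)"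
proof -
  obtain r1 where r1: "r1 \<in> R"
    "D (Q X (pre b Y)) = Q (D X) (pre b Y) + Q (X + smul lam (D X)) (D (pre b Y)) + r1"
    using assms(1) unfolding Q_leibniz_mod_def by (rule R_diffE)
  obtain r2 where r2: "r2 \<in> R"
    "D (Q (pre a X) Y) = Q (D (pre a X)) Y + Q (pre a X + smul lam (D (pre a X))) (D Y) + r2"
    using assms(2) unfolding Q_leibniz_mod_def by (rule R_diffE)
  obtain r3 where r3: "r3 \<in> R" "D (Q X Y) = Q (D X) Y + Q (X + smul lam (D X)) (D Y) + r3"
    using assms(3) unfolding Q_leibniz_mod_def by (rule R_diffE)
  obtain \<rho> where rho: "\<And>Z. pre (d0 (sc q (a * b))) Z = pre (sc q (d0 a * b)) Z
      + pre (sc q (a * d0 b)) Z + smul lam (pre (sc q (d0 a * d0 b)) Z) + \<rho> Z" "\<And>Z. \<rho> Z \<in> R"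
    using pre_letter_decomp[OF d0_sc_q_mult] by blast
  let ?err = "smul lam (pre (d0 a) r1) + pre a r1 + smul lam (pre (d0 b) r2) + pre b r2
     + \<rho> (Q X Y + smul lam (Q (D X) Y + Q (X + smul lam (D X)) (D Y) + r3))
     + smul lam (pre (sc q (d0 a * b)) r3) + smul lam (pre (sc q (a * d0 b)) r3)
     + smul (lam * lam) (pre (sc q (d0 a * d0 b)) r3) + pre (sc q (a * b)) r3"
  have "D (Q (pre a X) (pre b Y)) = Q (D (pre a X)) (pre b Y)
      + Q (pre a X + smul lam (D (pre a X))) (D (pre b Y)) + ?err"
    apply (simp only: Q_pre D_add D_pre)
    apply (simp only: r1(2) r2(2) r3(2) rho(1))
    apply (simp add: Q_pre D_pre add_ac)
    done
  moreover have "?err \<in> R"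
    by (intro R_add R_smul preserves_RD[OF preserves_R_pre] r1 r2 r3 rho)
  ultimately show ?thesis unfolding Q_leibniz_mod_def by simp
qed

lemma Q_leibniz_mod_words: "Q_leibniz_mod (wd u) (wd v)"
proof (induction "length u + length v" arbitrary: u v rule: less_induct)
  case less
  show ?case
  proof (cases "u = [] \<or> v = []")
    case True
    then show ?thesis
      by (auto simp: Q_leibniz_mod_def D_wd tensor_rel.zero simp del: bil_wd)
  next
    case False
    then obtain a u' b v' where uv: "u = a # u'" "v = b # v'"
      by (meson list.exhaust)
    have "Q_leibniz_mod (wd u') (wd (b # v'))" "Q_leibniz_mod (wd (a # u')) (wd v')"
      "Q_leibniz_mod (wd u') (wd v')"
      using less[of u' v] less[of u v'] less[of u' v'] by (simp_all add: uv)
    then show ?thesis unfolding uv wd_Cons by (rule Q_leibniz_mod_pre)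
  qed
qed

lemma Q_leibniz_mod: "Q_leibniz_mod F G"
  unfolding Q_leibniz_mod_def
  by (rule bil_diff_in_R[of "\<lambda>F G. D (Q F G)" "\<lambda>F G. Q (D F) G + Q (F + smul lam (D F)) (D G)"];
      intro fm_linear_D_intros Q_leibniz_mod_words[unfolded Q_leibniz_mod_def])

lemma D_pr_pre_mod:
  "D (pr (pre x F) b) - (pr (D (pre x F)) b + pr (pre x F) (D b)
     + smul lam (pr (D (pre x F)) (D b))) \<in> R"
proof -
  obtain r where r: "r \<in> R" "D (Q F b) = Q (D F) b + Q (F + smul lam (D F)) (D b) + r"
    using Q_leibniz_mod unfolding Q_leibniz_mod_def by (rule R_diffE)
  have "D (pr (pre x F) b) = pr (D (pre x F)) b + pr (pre x F) (D b)
     + smul lam (pr (D (pre x F)) (D b)) + (smul lam (pre (d0 x) r) + pre x r)"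
    by (simp only: pr_pre D_pre r(2)) (simp add: pr_pre D_pre add_ac)
  moreover have "smul lam (pre (d0 x) r) + pre x r \<in> R"
    by (intro R_add R_smul preserves_RD[OF preserves_R_pre] r)
  ultimately show ?thesis by simp
qed

lemma D_pr_mod: "D (pr a b) - (pr (D a) b + pr a (D b) + smul lam (pr (D a) (D b))) \<in> R"
  by (rule fm_linear_diff_in_R_on_pre[of "\<lambda>a. D (pr a b)"
        "\<lambda>a. pr (D a) b + pr a (D b) + smul lam (pr (D a) (D b))"];
      (intro fm_linear_D_intros)?)
    (auto intro: D_pr_pre_mod simp: pr_Nil D_wd tensor_rel.zero simp del: pre_wd)

lemma D_su_mod: "D (su a b) - (su (D a) b + su a (D b) + smul lam (su (D a) (D b))) \<in> R"
  using D_pr_mod[of b a] by (simp add: su_eq_pr_swap add_ac)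

lemma D_bu_pre_mod:
  "D (bu (pre x F) (pre y G)) - (bu (D (pre x F)) (pre y G) + bu (pre x F) (D (pre y G))
    + smul lam (bu (D (pre x F)) (D (pre y G)))) \<in> R"
proof -
  obtain r where r: "r \<in> R" "D (Q F G) = Q (D F) G + Q (F + smul lam (D F)) (D G) + r"
    using Q_leibniz_mod unfolding Q_leibniz_mod_def by (rule R_diffE)
  obtain \<rho> where rho: "\<And>Z. pre (d0 (x * y)) Z = pre (d0 x * y) Z + pre (x * d0 y) Z
      + smul lam (pre (d0 x * d0 y) Z) + \<rho> Z" "\<And>Z. \<rho> Z \<in> R"
    using pre_letter_decomp[OF d0_mult] by blast
  let ?err = "\<rho> (Q F G + smul lam (Q (D F) G + Q (F + smul lam (D F)) (D G) + r))
    + smul lam (pre (d0 x * y) r) + smul lam (pre (x * d0 y) r)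
    + smul (lam * lam) (pre (d0 x * d0 y) r) + pre (x * y) r"
  have "D (bu (pre x F) (pre y G)) = bu (D (pre x F)) (pre y G) + bu (pre x F) (D (pre y G))
    + smul lam (bu (D (pre x F)) (D (pre y G))) + ?err"
    by (simp only: bu_pre D_pre r(2) rho(1)) (simp add: bu_pre D_pre add_ac)
  moreover have "?err \<in> R"
    by (intro R_add R_smul preserves_RD[OF preserves_R_pre] r rho)
  ultimately show ?thesis by simp
qed

lemma D_bu_mod: "D (bu a b) - (bu (D a) b + bu a (D b) + smul lam (bu (D a) (D b))) \<in> R"
proof (rule fm_linear_diff_in_R_on_pre[of "\<lambda>a. D (bu a b)"
      "\<lambda>a. bu (D a) b + bu a (D b) + smul lam (bu (D a) (D b))"];
    (intro fm_linear_D_intros)?)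
  fix x w
  show "D (bu (pre x (wd w)) b) - (bu (D (pre x (wd w))) b + bu (pre x (wd w)) (D b) +
      smul lam (bu (D (pre x (wd w))) (D b))) \<in> R"
    by (rule fm_linear_diff_in_R_on_pre[of "\<lambda>b. D (bu (pre x (wd w)) b)"
          "\<lambda>b. bu (D (pre x (wd w))) b + bu (pre x (wd w)) (D b)
             + smul lam (bu (D (pre x (wd w))) (D b))"];
        (intro fm_linear_D_intros)?)
      (auto intro: D_bu_pre_mod simp: bu_Nil2 D_wd tensor_rel.zero simp del: pre_wd)
qed (auto simp: bu_Nil1 D_wd tensor_rel.zero simp del: pre_wd)

lemma teq_D: "teq sc a a' \<Longrightarrow> teq sc (D a) (D a')"
  by (rule teq_map[OF _ preserves_R_D]) (simp add: dA_def)

lemma comm_diff_q_tridend_T_plus: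
  "comm_diff_q_tridend tplus (teq sc) smul pr su bu D q lam"
  unfolding comm_diff_q_tridend_def Let_def
proof (intro conjI allI impI)
  fix a b c :: "('a, 'k) fm"
  assume "tplus a" "tplus b" "tplus c"
  then show "teq sc (pr (pr a b) c) (pr a (pr b c + su b c + smul q (bu b c)))"
    and "teq sc (su (pr a b + su a b + smul q (bu a b)) c) (su a (su b c))"
    by (simp_all only: pr_pr_teq su_star_teq)
  show "teq sc (pr (su a b) c) (su a (pr b c))" "teq sc (bu (su a b) c) (su a (bu b c))"
    "teq sc (bu (pr a b) c) (bu a (su b c))" "teq sc (pr (bu a b) c) (bu a (pr b c))"
    "teq sc (bu (bu a b) c) (bu a (bu b c))"
    by (simp_all only: pr_su bu_su bu_pr pr_bu bu_bu teq_refl)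
next
  fix a b :: "('a, 'k) fm"
  show "teq sc (su a b) (pr b a)" "teq sc (bu a b) (bu b a)"
    by (simp_all only: su_eq_pr_swap bu_comm[of a b] teq_refl)
  show "teq sc (D (pr a b)) (pr (D a) b + pr a (D b) + smul lam (pr (D a) (D b)))"
    and "teq sc (D (su a b)) (su (D a) b + su a (D b) + smul lam (su (D a) (D b)))"
    and "teq sc (D (bu a b)) (bu (D a) b + bu a (D b) + smul lam (bu (D a) (D b)))"
    using D_pr_mod D_su_mod D_bu_mod by (simp_all add: teq_iff)
qed (simp_all add: tplus_pr tplus_su tplus_bu tplus_dA teq_pr teq_su teq_bu teq_D)

end

theorem proposition4p3:
  fixes sc :: "'k::comm_ring_1 \<Rightarrow> 'a::comm_ring \<Rightarrow> 'a"
    and d0 :: "'a \<Rightarrow> 'a" and lam q :: 'k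
  assumes "comm_k_algebra sc"
    and "diff_weight sc lam d0"
  shows "comm_diff_q_tridend tplus (teq sc) smul (precA sc q) (succA sc q) (bulA sc q)
           (dA lam d0) q lam"
proof -
  interpret diff_tensor_algebra sc q lam d0
    using assms by unfold_locales
  show ?thesis by (rule comm_diff_q_tridend_T_plus)
qed

end
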